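(* Let $K\subset\mathbb R^n$ be a convex body and let $u\in S^{n-1}$. Then \[ S_u(K^c)\subseteq\mathrm{conv}_c(S_u(K^c))\subseteq(S_uK)^c. \] In particular $\mathrm{Vol}(K)\,\mathrm{Vol}(K^c)\le\mathrm{Vol}(S_uK)\,\mathrm{Vol}((S_uK)^c)$.
   Context: $B(x,r)$ is the closed Euclidean ball. For $A\subseteq\mathbb R^n$, $A^c=\bigcap_{x\in A}B(x,1)$ and $\mathrm{conv}_c(A)=A^{cc}$. For a convex body $L$ and $u\in S^{n-1}$, the Steiner symmetral $S_u(L)$ is defined as follows: for $x\in P_{u^\perp}L$ write $L\cap(x+\mathbb Ru)=[x+a(x)u,x+b(x)u]$; then $S_u(L)=\{x+tu:\ x\in P_{u^\perp}L,\ |t|\le\tfrac{b(x)-a(x)}2\}$ (with $S_u(\emptyset)=\emptyset$). *)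

theory Defs
  imports "HOL-Analysis.Analysis"
begin

text \<open>c-dual: A^c = intersection of closed unit balls centred at points of A
  (empty intersection = whole space).\<close>
definition cdual :: "'a::euclidean_space set \<Rightarrow> 'a set" where
  "cdual A = (\<Inter>x\<in>A. cball x 1)"

definition conv_c :: "'a::euclidean_space set \<Rightarrow> 'a set" where
  "conv_c A = cdual (cdual A)"

definition proj_perp :: "'a::euclidean_space \<Rightarrow> 'a \<Rightarrow> 'a" where
  "proj_perp u y = y - (y \<bullet> u) *\<^sub>R u"

definition chord :: "'a::euclidean_space \<Rightarrow> 'a set \<Rightarrow> 'a \<Rightarrow> real set" where
  "chord u L x = {t. x + t *\<^sub>R u \<in> L}"

text \<open>Steiner symmetral: for a compact convex L, the chord over x is
  [x + a(x) u, x + b(x) u] with a(x) = Inf, b(x) = Sup of the chord parameters.\<close>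
definition steiner :: "'a::euclidean_space \<Rightarrow> 'a set \<Rightarrow> 'a set" where
  "steiner u L = {x + t *\<^sub>R u | x t. x \<in> proj_perp u ` L \<and>
      \<bar>t\<bar> \<le> (Sup (chord u L x) - Inf (chord u L x)) / 2}"

definition convex_body :: "'a::euclidean_space set \<Rightarrow> bool" where
  "convex_body K \<longleftrightarrow> compact K \<and> convex K \<and> interior K \<noteq> {}"

end

theory Submission
  imports Defs
begin

(* Write x, y for the projections of p \<in> S_u(K^c) and q \<in> S_u K onto the hyperplane
   orthogonal to u, and [a1, b1], [a2, b2] for the chords of K^c over x and of K over y.
   The crosswise endpoints x + b1 u, y + a2 u and x + a1 u, y + b2 u are at distance at
   most 1, i.e. |x - y|^2 + (b1 - a2)^2 \<le> 1 and |x - y|^2 + (b2 - a1)^2 \<le> 1. After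
   symmetrisation the u-coordinates of p and q differ by at most the mean of b1 - a2 and
   b2 - a1, whose square is at most the mean of the squares; by Pythagoras |p - q| \<le> 1.
   Hence S_u(K^c) \<subseteq> (S_u K)^c, and then also conv_c(S_u(K^c)) \<subseteq> (S_u K)^c
   since c-duality reverses inclusions and A^ccc = A^c. For the volumes, Steiner
   symmetrisation of a convex body preserves volume (Cavalieri's principle along u), so
   Vol K = Vol S_u K and Vol K^c = Vol S_u(K^c) \<le> Vol (S_u K)^c. *)

lemma proj_perp_inner: "norm u = 1 \<Longrightarrow> proj_perp u y \<bullet> u = 0"
  by (simp add: proj_perp_def inner_diff_left dot_square_norm)

lemma proj_perp_add_scaleR: "norm u = 1 \<Longrightarrow> proj_perp u (y + t *\<^sub>R u) = proj_perp u y"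
  by (simp add: proj_perp_def inner_add_left dot_square_norm algebra_simps)

lemma proj_perp_add_inner_scaleR: "proj_perp u y + (y \<bullet> u) *\<^sub>R u = y"
  by (simp add: proj_perp_def)

lemma norm_add_scaleR_orthogonal_sq:
  assumes "w \<bullet> u = 0" "norm u = 1"
  shows "(norm (w + c *\<^sub>R u))\<^sup>2 = (norm w)\<^sup>2 + c\<^sup>2"
  using assms by (simp add: norm_add_Pythagorean orthogonal_def)

lemma mem_chord_iff_proj_perp:
  assumes "norm u = 1"
  shows "t \<in> chord u L z \<longleftrightarrow> z \<bullet> u + t \<in> chord u L (proj_perp u z)"
proof -
  have "z + t *\<^sub>R u = proj_perp u z + (z \<bullet> u + t) *\<^sub>R u"
    by (simp add: proj_perp_def algebra_simps)
  then show ?thesis by (simp add: chord_def)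
qed

lemma chord_nonempty: "x \<in> proj_perp u ` L \<Longrightarrow> chord u L x \<noteq> {}"
proof
  assume "x \<in> proj_perp u ` L" "chord u L x = {}"
  then obtain y where "y \<in> L" "x = proj_perp u y" "x + (y \<bullet> u) *\<^sub>R u \<notin> L"
    by (auto simp: chord_def)
  then show False
    by (simp add: proj_perp_add_inner_scaleR)
qed

lemma compact_chord:
  assumes "compact L" "norm u = 1"
  shows "compact (chord u L z)"
proof -
  have "closed ((\<lambda>t. z + t *\<^sub>R u) -` L)"
    using assms(1) by (intro continuous_closed_vimage compact_imp_closed continuous_intros)
  then have "closed (chord u L z)"
    by (simp add: chord_def vimage_def)
  moreover have "chord u L z \<subseteq> (\<lambda>y. (y - z) \<bullet> u) ` L"
    using assms(2) by (force simp: chord_def dot_square_norm)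
  moreover have "compact ((\<lambda>y. (y - z) \<bullet> u) ` L)"
    using assms(1) by (intro compact_continuous_image continuous_intros)
  ultimately show ?thesis
    by (meson bounded_subset compact_eq_bounded_closed)
qed

lemma convex_chord: "convex L \<Longrightarrow> convex (chord u L z)"
  unfolding convex_def chord_def
proof clarify
  fix s t a b :: real
  assume L: "\<forall>x\<in>L. \<forall>y\<in>L. \<forall>a\<ge>0. \<forall>b\<ge>0. a + b = 1 \<longrightarrow> a *\<^sub>R x + b *\<^sub>R y \<in> L"
    and st: "z + s *\<^sub>R u \<in> L" "z + t *\<^sub>R u \<in> L" and ab: "0 \<le> a" "0 \<le> b" "a + b = 1"
  have "z + (a * s + b * t) *\<^sub>R u = a *\<^sub>R (z + s *\<^sub>R u) + b *\<^sub>R (z + t *\<^sub>R u)"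
    using ab(3) by (simp add: algebra_simps flip: scaleR_add_left)
  then show "z + (a *\<^sub>R s + b *\<^sub>R t) *\<^sub>R u \<in> L"
    using L st ab by simp
qed

lemma chord_Inf_Sup:
  assumes "compact L" "norm u = 1" "chord u L z \<noteq> {}"
  shows "Inf (chord u L z) \<in> chord u L z" "Sup (chord u L z) \<in> chord u L z"
    "Inf (chord u L z) \<le> Sup (chord u L z)"
proof -
  have "bounded (chord u L z)" "closed (chord u L z)"
    using compact_chord[OF assms(1,2)] compact_imp_bounded compact_imp_closed by auto
  then show "Inf (chord u L z) \<in> chord u L z" "Sup (chord u L z) \<in> chord u L z"
    "Inf (chord u L z) \<le> Sup (chord u L z)"
    using assms(3) by (auto intro: closed_contains_Inf closed_contains_Sup cInf_le_cSup
        bounded_imp_bdd_above bounded_imp_bdd_below)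
qed

lemma chord_eq_atLeastAtMost:
  assumes "compact L" "convex L" "norm u = 1" "chord u L z \<noteq> {}"
  shows "chord u L z = {Inf (chord u L z) .. Sup (chord u L z)}"
proof -
  have "connected (chord u L z)"
    using assms(2) convex_chord convex_connected by blast
  then obtain a b where "chord u L z = {a..b}"
    using compact_chord[OF assms(1,3)] connected_compact_interval_1 by blast
  with assms(4) show ?thesis by simp
qed

definition half_chord :: "'a::euclidean_space \<Rightarrow> 'a set \<Rightarrow> 'a \<Rightarrow> real" where
  "half_chord u L x = (Sup (chord u L x) - Inf (chord u L x)) / 2"

lemma mem_steiner_iff:
  assumes u: "norm u = 1"
  shows "w \<in> steiner u L \<longleftrightarrow>
    proj_perp u w \<in> proj_perp u ` L \<and> \<bar>w \<bullet> u\<bar> \<le> half_chord u L (proj_perp u w)"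
proof
  assume "w \<in> steiner u L"
  then obtain x t where w: "w = x + t *\<^sub>R u" "x \<in> proj_perp u ` L" "\<bar>t\<bar> \<le> half_chord u L x"
    by (auto simp: steiner_def half_chord_def)
  have "x \<bullet> u = 0"
    using w(2) proj_perp_inner[OF u] by auto
  then have "proj_perp u w = x" "w \<bullet> u = t"
    using u by (simp_all add: w(1) proj_perp_add_scaleR proj_perp_def inner_add_left dot_square_norm)
  with w show "proj_perp u w \<in> proj_perp u ` L \<and> \<bar>w \<bullet> u\<bar> \<le> half_chord u L (proj_perp u w)"
    by simp
next
  assume "proj_perp u w \<in> proj_perp u ` L \<and> \<bar>w \<bullet> u\<bar> \<le> half_chord u L (proj_perp u w)"
  then show "w \<in> steiner u L"
    unfolding steiner_def half_chord_def
    by (intro CollectI exI[of _ "proj_perp u w"] exI[of _ "w \<bullet> u"])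
      (simp add: proj_perp_add_inner_scaleR)
qed

lemma steiner_nonempty:
  assumes "compact L" "L \<noteq> {}" "norm u = 1"
  shows "steiner u L \<noteq> {}"
proof -
  obtain y where y: "y \<in> L"
    using assms(2) by blast
  let ?x = "proj_perp u y"
  have "chord u L ?x \<noteq> {}"
    using y by (intro chord_nonempty) simp
  then have "0 \<le> half_chord u L ?x"
    using chord_Inf_Sup(3)[OF assms(1,3)] by (simp add: half_chord_def)
  moreover have "proj_perp u ?x = ?x" "?x \<bullet> u = 0"
    using proj_perp_inner[OF assms(3)] by (simp_all add: proj_perp_def[of u ?x])
  ultimately have "?x \<in> steiner u L"
    using y by (simp add: mem_steiner_iff[OF assms(3)])
  then show ?thesis by blast
qed

lemma chord_steiner:
  assumes u: "norm u = 1" and z: "proj_perp u z \<in> proj_perp u ` L"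
  defines "h \<equiv> half_chord u L (proj_perp u z)"
  shows "chord u (steiner u L) z = {- h - z \<bullet> u .. h - z \<bullet> u}"
proof -
  have "t \<in> chord u (steiner u L) z \<longleftrightarrow> \<bar>z \<bullet> u + t\<bar> \<le> h" for t
    using z u
    by (simp add: chord_def mem_steiner_iff proj_perp_add_scaleR inner_add_left dot_square_norm h_def)
  then have "chord u (steiner u L) z = {t. \<bar>z \<bullet> u + t\<bar> \<le> h}"
    by blast
  also have "\<dots> = {- h - z \<bullet> u .. h - z \<bullet> u}"
    by (auto simp: abs_le_iff)
  finally show ?thesis .
qed

lemma cdual_antimono: "A \<subseteq> B \<Longrightarrow> cdual B \<subseteq> cdual A"
  by (auto simp: cdual_def)

lemma subset_cdual_cdual: "A \<subseteq> cdual (cdual A)"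
  by (auto simp: cdual_def dist_commute)

lemma subset_conv_c: "A \<subseteq> conv_c A"
  unfolding conv_c_def by (rule subset_cdual_cdual)

lemma conv_c_subset_cdual: "A \<subseteq> cdual B \<Longrightarrow> conv_c A \<subseteq> cdual B"
  unfolding conv_c_def
  by (meson cdual_antimono order_trans subset_cdual_cdual)

lemma compact_cdual:
  assumes "A \<noteq> {}" shows "compact (cdual A)"
proof -
  obtain a where "a \<in> A"
    using assms by blast
  then have "cdual A \<subseteq> cball a 1"
    by (auto simp: cdual_def)
  then have "bounded (cdual A)"
    using bounded_cball bounded_subset by blast
  moreover have "closed (cdual A)"
    unfolding cdual_def by (auto intro: closed_INT)
  ultimately show ?thesis
    by (simp add: compact_eq_bounded_closed)
qed

lemma convex_cdual: "convex (cdual A)"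
  unfolding cdual_def by (auto intro: convex_INT)

lemma chord_ends_mem:
  assumes "compact L" "norm u = 1" "x \<in> proj_perp u ` L"
  shows "x + Inf (chord u L x) *\<^sub>R u \<in> L" "x + Sup (chord u L x) *\<^sub>R u \<in> L"
  using chord_Inf_Sup(1,2)[OF assms(1,2) chord_nonempty[OF assms(3)]]
  by (simp_all add: chord_def)

lemma centered_intervals_sq_dist_le:
  fixes a1 b1 a2 b2 s t W :: real
  assumes "W + (a2 - b1)\<^sup>2 \<le> 1" "W + (b2 - a1)\<^sup>2 \<le> 1"
    and "\<bar>s\<bar> \<le> (b1 - a1) / 2" "\<bar>t\<bar> \<le> (b2 - a2) / 2"
  shows "W + (t - s)\<^sup>2 \<le> 1"
proof -
  define m where "m = ((b1 - a2) + (b2 - a1)) / 2"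
  have "\<bar>t - s\<bar> \<le> m"
    using abs_triangle_ineq4[of t s] assms(3,4) unfolding m_def by argo
  then have "(t - s)\<^sup>2 \<le> m\<^sup>2"
    using power_mono[OF _ abs_ge_zero, of "t - s" m 2] by simp
  also have "\<dots> \<le> ((b1 - a2)\<^sup>2 + (b2 - a1)\<^sup>2) / 2"
  proof -
    have "((x + y) / 2)\<^sup>2 \<le> (x\<^sup>2 + y\<^sup>2) / 2" for x y :: real
      using zero_le_power2[of "x - y"] by (simp add: power2_eq_square algebra_simps)
    then show ?thesis
      unfolding m_def .
  qed
  also have "\<dots> \<le> 1 - W"
    using assms(1,2) power2_commute[of a2 b1] by argo
  finally show ?thesis by argo
qed

lemma steiner_subset_cdual_steiner:
  assumes L: "compact L" and M: "compact M" "M \<subseteq> cdual L" and u: "norm u = 1"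
  shows "steiner u M \<subseteq> cdual (steiner u L)"
proof (clarsimp simp: cdual_def)
  fix p q assume p: "p \<in> steiner u M" and q: "q \<in> steiner u L"
  define x y where "x = proj_perp u p" and "y = proj_perp u q"
  define a1 b1 where "a1 = Inf (chord u M x)" and "b1 = Sup (chord u M x)"
  define a2 b2 where "a2 = Inf (chord u L y)" and "b2 = Sup (chord u L y)"
  have x: "x \<in> proj_perp u ` M" "\<bar>p \<bullet> u\<bar> \<le> (b1 - a1) / 2"
    using p by (simp_all add: mem_steiner_iff[OF u] x_def a1_def b1_def half_chord_def)
  have y: "y \<in> proj_perp u ` L" "\<bar>q \<bullet> u\<bar> \<le> (b2 - a2) / 2"
    using q by (simp_all add: mem_steiner_iff[OF u] y_def a2_def b2_def half_chord_def)
  define w where "w = y - x"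
  have w: "w \<bullet> u = 0"
    using proj_perp_inner[OF u] by (simp add: w_def x_def y_def inner_diff_left)
  have "(norm w)\<^sup>2 + (s - r)\<^sup>2 \<le> 1"
    if "y + s *\<^sub>R u \<in> L" "x + r *\<^sub>R u \<in> M" for s r
  proof -
    have "norm (w + (s - r) *\<^sub>R u) \<le> 1"
      using that M(2) by (auto simp: cdual_def dist_norm w_def algebra_simps)
    then show ?thesis
      by (simp add: norm_add_scaleR_orthogonal_sq[OF w u, symmetric] power_le_one)
  qed
  then have "(norm w)\<^sup>2 + (q \<bullet> u - p \<bullet> u)\<^sup>2 \<le> 1"
    using chord_ends_mem[OF L u y(1)] chord_ends_mem[OF M(1) u x(1)]
    by (intro centered_intervals_sq_dist_le[OF _ _ x(2) y(2)]) (simp_all add: a1_def b1_def a2_def b2_def)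
  moreover have "q - p = w + (q \<bullet> u - p \<bullet> u) *\<^sub>R u"
    by (simp add: w_def x_def y_def proj_perp_def algebra_simps)
  ultimately have "(norm (q - p))\<^sup>2 \<le> 1\<^sup>2"
    by (simp add: norm_add_scaleR_orthogonal_sq[OF w u])
  then show "dist q p \<le> 1"
    by (simp add: dist_norm power2_le_imp_le)
qed

lemma borel_chord:
  fixes A :: "'a::euclidean_space set"
  assumes "A \<in> sets borel"
  shows "chord u A z \<in> sets borel"
proof -
  have "chord u A z = (\<lambda>t. z + t *\<^sub>R u) -` A \<inter> space borel"
    by (auto simp: chord_def)
  also have "\<dots> \<in> sets borel"
    using assms by (intro measurable_sets[OF _ assms]) auto
  finally show ?thesis .
qed

lemma nn_integral_line_indicator:
  fixes A :: "'a::euclidean_space set"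
  assumes "A \<in> sets borel"
  shows "(\<integral>\<^sup>+t. indicator A (t *\<^sub>R u + z) * c \<partial>lborel) = emeasure lborel (chord u A z) * c"
proof -
  have "(\<integral>\<^sup>+t. indicator A (t *\<^sub>R u + z) * c \<partial>lborel) = (\<integral>\<^sup>+t. indicator (chord u A z) t * c \<partial>lborel)"
    by (intro nn_integral_cong) (auto simp: indicator_def chord_def add.commute)
  then show ?thesis
    using borel_chord[OF assms] by (simp add: nn_integral_multc)
qed

lemma nn_integral_slab_translate:
  fixes A :: "'a::euclidean_space set"
  assumes A: "A \<in> sets borel" and u: "norm u = 1"
  shows "(\<integral>\<^sup>+w. indicator A w * indicator {0..1::real} (w \<bullet> u - t) \<partial>lborel) =
    (\<integral>\<^sup>+z. indicator A (t *\<^sub>R u + z) * indicator {z. z \<bullet> u \<in> {0..1}} z \<partial>lborel)"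
proof -
  have "(\<integral>\<^sup>+w. indicator A w * indicator {0..1::real} (w \<bullet> u - t) \<partial>distr lborel borel ((+) (t *\<^sub>R u))) =
      (\<integral>\<^sup>+z. indicator A (t *\<^sub>R u + z) * indicator {z. z \<bullet> u \<in> {0..1}} z \<partial>lborel)"
    using A u by (subst nn_integral_distr)
      (auto intro!: nn_integral_cong simp: indicator_def inner_add_left dot_square_norm)
  then show ?thesis
    by (simp add: lborel_distr_plus)
qed

(* Every line in direction u meets the slab 0 \<le> z \<bullet> u \<le> 1 in a unit segment, so integrating
   chord lengths over the slab is Cavalieri's principle without parametrising u\<perp>. *)
lemma emeasure_lborel_eq_nn_integral_chord:
  fixes A :: "'a::euclidean_space set"
  assumes A: "A \<in> sets borel" and u: "norm u = 1"
  shows "emeasure lborel A =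
    (\<integral>\<^sup>+z. indicator {z. z \<bullet> u \<in> {0..1}} z * emeasure lborel (chord u A z) \<partial>lborel)"
proof -
  let ?S = "{z. z \<bullet> u \<in> {0..1::real}}"
  have PF: "pair_sigma_finite (lborel::'a measure) (lborel::real measure)"
    by (simp add: pair_sigma_finite_def lborel.sigma_finite_measure_axioms)
  have meas1: "(\<lambda>(w, t). indicator A w * indicator {0..1::real} (w \<bullet> u - t) :: ennreal)
      \<in> borel_measurable (lborel \<Otimes>\<^sub>M lborel)"
    using A by (auto simp: case_prod_unfold cong: measurable_cong_sets)
  have meas2: "(\<lambda>(z, t). indicator A (t *\<^sub>R u + z) * indicator ?S z :: ennreal)
      \<in> borel_measurable (lborel \<Otimes>\<^sub>M lborel)"
    using A by (auto simp: case_prod_unfold cong: measurable_cong_sets)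
  have one: "(\<integral>\<^sup>+t. indicator {0..1::real} (w \<bullet> u - t) \<partial>lborel) = 1" for w
  proof -
    have "(\<lambda>t. indicator {0..1::real} (w \<bullet> u - t) :: ennreal) = indicator {w \<bullet> u - 1 .. w \<bullet> u}"
      by (auto simp: indicator_def fun_eq_iff)
    then show ?thesis by simp
  qed
  have "emeasure lborel A = (\<integral>\<^sup>+w. indicator A w \<partial>lborel)"
    using A by simp
  also have "\<dots> = (\<integral>\<^sup>+w. \<integral>\<^sup>+t. indicator A w * indicator {0..1::real} (w \<bullet> u - t) \<partial>lborel \<partial>lborel)"
    by (subst nn_integral_cmult) (auto simp: one)
  also have "\<dots> = (\<integral>\<^sup>+t. \<integral>\<^sup>+w. indicator A w * indicator {0..1::real} (w \<bullet> u - t) \<partial>lborel \<partial>lborel)"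
    using pair_sigma_finite.Fubini'[OF PF meas1] by simp
  also have "\<dots> = (\<integral>\<^sup>+t. \<integral>\<^sup>+z. indicator A (t *\<^sub>R u + z) * indicator ?S z \<partial>lborel \<partial>lborel)"
    by (rule nn_integral_cong) (rule nn_integral_slab_translate[OF A u])
  also have "\<dots> = (\<integral>\<^sup>+z. \<integral>\<^sup>+t. indicator A (t *\<^sub>R u + z) * indicator ?S z \<partial>lborel \<partial>lborel)"
    using pair_sigma_finite.Fubini'[OF PF meas2] by simp
  also have "\<dots> = (\<integral>\<^sup>+z. indicator ?S z * emeasure lborel (chord u A z) \<partial>lborel)"
    by (rule nn_integral_cong) (rule trans[OF nn_integral_line_indicator[OF A] mult.commute])
  finally show ?thesis .
qed

lemma borel_measurable_emeasure_chord:
  fixes L :: "'a::euclidean_space set"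
  assumes "L \<in> sets borel"
  shows "(\<lambda>z. emeasure lborel (chord u L z)) \<in> borel_measurable (borel :: 'a measure)"
proof -
  let ?Q = "{(z, t). z + t *\<^sub>R u \<in> L} :: ('a \<times> real) set"
  have "(\<lambda>(z, t). z + t *\<^sub>R u) \<in> borel_measurable (lborel \<Otimes>\<^sub>M lborel)"
    by measurable
  from measurable_sets[OF this assms] have "?Q \<in> sets (lborel \<Otimes>\<^sub>M lborel)"
    by (simp add: vimage_def case_prod_unfold space_pair_measure)
  then have "(\<lambda>z. emeasure lborel (Pair z -` ?Q)) \<in> borel_measurable (lborel :: 'a measure)"
    by (rule lborel.measurable_emeasure_Pair)
  moreover have "Pair z -` ?Q = chord u L z" for z
    by (auto simp: chord_def)
  ultimately show ?thesis
    by simp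
qed

lemma borel_steiner:
  fixes L :: "'a::euclidean_space set"
  assumes L: "compact L" "convex L" and u: "norm u = 1"
  shows "steiner u L \<in> sets borel"
proof -
  define P where "P = proj_perp u ` L"
  define g where "g = (\<lambda>x. measure lborel (chord u L x))"
  have proj_cont: "continuous_on UNIV (proj_perp u)"
    unfolding proj_perp_def by (intro continuous_intros)
  have [measurable]: "proj_perp u \<in> borel_measurable borel"
    by (rule borel_measurable_continuous_onI[OF proj_cont])
  have "compact P"
    unfolding P_def by (rule compact_continuous_image[OF continuous_on_subset[OF proj_cont] L(1)]) simp
  then have [measurable]: "P \<in> sets borel"
    by (rule borel_compact)
  have [measurable]: "(\<lambda>x. emeasure lborel (chord u L x)) \<in> borel_measurable borel"
    by (rule borel_measurable_emeasure_chord[OF borel_compact[OF L(1)]])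
  then have [measurable]: "g \<in> borel_measurable borel"
    unfolding g_def measure_def by measurable
  have "g x = 2 * half_chord u L x" if "x \<in> P" for x
  proof -
    have ne: "chord u L x \<noteq> {}"
      using that by (simp add: P_def chord_nonempty)
    show ?thesis
      unfolding g_def half_chord_def
      by (subst chord_eq_atLeastAtMost[OF L u ne]) (simp add: chord_Inf_Sup(3)[OF L(1) u ne])
  qed
  then have "steiner u L = {w \<in> space borel. proj_perp u w \<in> P \<and> 2 * \<bar>w \<bullet> u\<bar> \<le> g (proj_perp u w)}"
    by (auto simp: mem_steiner_iff[OF u] P_def)
  also have "\<dots> \<in> sets borel"
    by measurable
  finally show ?thesis .
qed

lemma emeasure_chord_steiner:
  fixes L :: "'a::euclidean_space set"
  assumes L: "compact L" "convex L" and u: "norm u = 1"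
  shows "emeasure lborel (chord u (steiner u L) z) = emeasure lborel (chord u L z)"
proof (cases "proj_perp u z \<in> proj_perp u ` L")
  case False
  then have "z + t *\<^sub>R u \<notin> L" for t
    by (metis image_eqI proj_perp_add_scaleR[OF u])
  moreover have "z + t *\<^sub>R u \<notin> steiner u L" for t
    using False by (simp add: mem_steiner_iff[OF u] proj_perp_add_scaleR[OF u])
  ultimately show ?thesis
    by (simp add: chord_def)
next
  case True
  define x c where "x = proj_perp u z" and "c = z \<bullet> u"
  define a b where "a = Inf (chord u L x)" and "b = Sup (chord u L x)"
  have ne: "chord u L x \<noteq> {}"
    using True by (simp add: chord_nonempty x_def)
  have ab: "a \<le> b"
    unfolding a_def b_def by (rule chord_Inf_Sup(3)[OF L(1) u ne])
  have Lx: "chord u L x = {a..b}"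
    unfolding a_def b_def by (rule chord_eq_atLeastAtMost[OF L u ne])
  have "t \<in> chord u L z \<longleftrightarrow> c + t \<in> {a..b}" for t
    using mem_chord_iff_proj_perp[OF u, of t L z] Lx by (simp add: x_def c_def)
  then have "chord u L z = {t. c + t \<in> {a..b}}"
    by blast
  also have "\<dots> = {a - c .. b - c}"
    by auto
  finally have "chord u L z = {a - c .. b - c}" .
  moreover have "chord u (steiner u L) z = {- ((b - a) / 2) - c .. (b - a) / 2 - c}"
    using chord_steiner[OF u True] by (simp add: half_chord_def a_def b_def x_def c_def)
  ultimately show ?thesis
    using ab by simp
qed

lemma measure_steiner:
  fixes L :: "'a::euclidean_space set"
  assumes L: "compact L" "convex L" and u: "norm u = 1"
  shows "measure lebesgue (steiner u L) = measure lebesgue L"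
proof -
  have "emeasure lborel (steiner u L) = emeasure lborel L"
    using emeasure_lborel_eq_nn_integral_chord[OF borel_steiner[OF L u] u]
      emeasure_lborel_eq_nn_integral_chord[OF borel_compact[OF L(1)] u]
    by (simp add: emeasure_chord_steiner[OF L u])
  then show ?thesis
    using borel_steiner[OF L u] borel_compact[OF L(1)] by (simp add: measure_def)
qed

theorem theorem5p8:
  fixes K :: "'a::euclidean_space set" and u :: 'a
  assumes "convex_body K" and "norm u = 1"
  shows "steiner u (cdual K) \<subseteq> conv_c (steiner u (cdual K))
       \<and> conv_c (steiner u (cdual K)) \<subseteq> cdual (steiner u K)
       \<and> measure lebesgue K * measure lebesgue (cdual K)
           \<le> measure lebesgue (steiner u K) * measure lebesgue (cdual (steiner u K))"
proof -
  have K: "compact K" "convex K" "K \<noteq> {}"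
    using assms(1) interior_subset by (auto simp: convex_body_def)
  have C: "compact (cdual K)" "convex (cdual K)"
    using K(3) by (simp_all add: compact_cdual convex_cdual)
  have sub: "steiner u (cdual K) \<subseteq> cdual (steiner u K)"
    using steiner_subset_cdual_steiner[OF K(1) C(1) order_refl assms(2)] .
  have vol: "measure lebesgue (steiner u (cdual K)) \<le> measure lebesgue (cdual (steiner u K))"
    using sub borel_steiner[OF C assms(2)]
      lmeasurable_compact[OF compact_cdual[OF steiner_nonempty[OF K(1,3) assms(2)]]]
    by (intro measure_mono_fmeasurable) simp_all
  show ?thesis
    using subset_conv_c conv_c_subset_cdual[OF sub] mult_left_mono[OF vol measure_nonneg[of lebesgue K]]
    by (simp add: measure_steiner[OF K(1,2) assms(2)] measure_steiner[OF C assms(2)])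
qed

end
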